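(* Let $n$ be an integer, $p$ a prime dividing $2n+1$, $K$ a number field containing a root $\omega$ of $\Delta_n=S_n'S_{n-1}-S_nS_{n-1}'$, and $v$ a valuation on $K$ with $v(p)=1$. Then $v(S_{n-1}(\omega))=0$.
   Context: The Chebyshev polynomials $S_j(\omega)$ are defined for all integers $j$ by $S_0=1$, $S_1=\omega$, $S_{j+1}=\omega S_j-S_{j-1}$; primes denote derivatives with respect to $\omega$. *)

theory Defs
  imports "HOL-Computational_Algebra.Polynomial" "HOL-Library.Extended_Real"
begin

fun chebS_nat :: "nat \<Rightarrow> int poly" where
  "chebS_nat 0 = 1"
| "chebS_nat (Suc 0) = [:0, 1:]"
| "chebS_nat (Suc (Suc k)) = [:0, 1:] * chebS_nat (Suc k) - chebS_nat k"

text \<open>Extension to all integers by the same recurrence (run backwards):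
  S_(-1) = 0 and S_(-j) = - S_(j-2) for j >= 2.\<close>
definition chebS :: "int \<Rightarrow> int poly" where
  "chebS j = (if 0 \<le> j then chebS_nat (nat j)
              else if j = -1 then 0 else - chebS_nat (nat (- j - 2)))"

definition Delta :: "int \<Rightarrow> int poly" where
  "Delta n = pderiv (chebS n) * chebS (n - 1) - chebS n * pderiv (chebS (n - 1))"

definition number_field :: "'a::field_char_0 itself \<Rightarrow> bool" where
  "number_field _ \<longleftrightarrow>
     (\<exists>B :: 'a set. finite B \<and> (\<forall>x. \<exists>c :: 'a \<Rightarrow> rat. x = (\<Sum>b\<in>B. of_rat (c b) * b)))"

definition valuation :: "('a::field \<Rightarrow> ereal) \<Rightarrow> bool" where
  "valuation v \<longleftrightarrow>
     (\<forall>x. v x = \<infinity> \<longleftrightarrow> x = 0) \<and>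
     (\<forall>x. v x \<noteq> - \<infinity>) \<and>
     (\<forall>x y. v (x * y) = v x + v y) \<and>
     (\<forall>x y. min (v x) (v y) \<le> v (x + y))"

end

theory Submission
  imports Defs
begin

text \<open>
  Negative indices reduce to positive ones by S(-j) = -S(j-2), so let n \<ge> 1 and put
  a = S(n)(\<omega>), b = S(n-1)(\<omega>). The polynomial identities S(n)^2 + S(n-1)^2 - X S(n) S(n-1) = 1
  and (X^2 - 4) \<Delta>(n) = S(n)^2 - S(n-1)^2 - (2n + 1) give a^2 + b^2 - \<omega> a b = 1 and
  a^2 - b^2 = 2n + 1. If v(\<omega>) < 0 then v(S(j)(\<omega>)) = j v(\<omega>), so v(a^2 - b^2) < 0, which is
  impossible for an integer; hence \<omega>, a, b are integral. As p divides 2n + 1, a^2 and b^2 agree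
  modulo the valuation ideal, so if one of a, b had positive valuation both would, and so would
  the left side of the first identity.
\<close>

text \<open>A constant rather than \<open>[:0, 1:]\<close>, which the simplifier would turn into \<open>pCons 0\<close> inside products.\<close>

definition polyX :: "int poly" where "polyX = [:0, 1:]"

lemma chebS_nat_Suc_0_polyX [simp]: "chebS_nat (Suc 0) = polyX"
  by (simp add: polyX_def)

lemma chebS_nat_Suc_Suc_polyX [simp]:
  "chebS_nat (Suc (Suc k)) = polyX * chebS_nat (Suc k) - chebS_nat k"
  by (simp add: polyX_def)

declare chebS_nat.simps(2,3) [simp del]

lemma pderiv_polyX [simp]: "pderiv polyX = 1"
  by (simp add: polyX_def pderiv_pCons)

lemma chebS_nat_cassini:
  "chebS_nat (Suc k)^2 + chebS_nat k^2 - polyX * chebS_nat (Suc k) * chebS_nat k = 1"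
  by (induction k) (simp_all add: algebra_simps power2_eq_square)

lemma pderiv_chebS_nat:
  "(polyX^2 - 4) * pderiv (chebS_nat k)
     = 2 * of_nat (k + 1) * chebS_nat (Suc k) - of_nat (k + 2) * polyX * chebS_nat k"
proof (induction k rule: chebS_nat.induct)
  case (3 k)
  have "(polyX^2 - 4) * pderiv (chebS_nat (Suc (Suc k)))
      = (polyX^2 - 4) * chebS_nat (Suc k) + polyX * ((polyX^2 - 4) * pderiv (chebS_nat (Suc k)))
        - (polyX^2 - 4) * pderiv (chebS_nat k)"
    by (simp add: pderiv_mult pderiv_diff algebra_simps)
  then show ?case
    unfolding 3 by (simp add: algebra_simps power2_eq_square)
qed (simp_all add: algebra_simps power2_eq_square)

lemma chebS_nat_wronskian:
  "(polyX^2 - 4) * (pderiv (chebS_nat (Suc k)) * chebS_nat k - chebS_nat (Suc k) * pderiv (chebS_nat k))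
     = chebS_nat (Suc k)^2 - chebS_nat k^2 - of_nat (2 * k + 3)"
proof -
  have "(polyX^2 - 4) * (pderiv (chebS_nat (Suc k)) * chebS_nat k - chebS_nat (Suc k) * pderiv (chebS_nat k))
      = ((polyX^2 - 4) * pderiv (chebS_nat (Suc k))) * chebS_nat k
        - chebS_nat (Suc k) * ((polyX^2 - 4) * pderiv (chebS_nat k))"
    by (simp add: algebra_simps)
  also have "\<dots> = of_nat (2 * k + 3) * (polyX * chebS_nat (Suc k) * chebS_nat k)
        - 2 * of_nat (k + 2) * chebS_nat k^2 - 2 * of_nat (k + 1) * chebS_nat (Suc k)^2"
    unfolding pderiv_chebS_nat by (simp add: algebra_simps power2_eq_square)
  also have "polyX * chebS_nat (Suc k) * chebS_nat k = chebS_nat (Suc k)^2 + chebS_nat k^2 - 1"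
    using chebS_nat_cassini[of k] by (simp add: algebra_simps)
  finally show ?thesis
    by (simp add: algebra_simps)
qed

lemma chebS_of_nat [simp]: "chebS (int k) = chebS_nat k"
  by (simp add: chebS_def)

lemma chebS_reflect: "chebS (- j - 2) = - chebS j"
  by (simp add: chebS_def nat_diff_distrib)

lemma Delta_reflect: "Delta (- n - 1) = - Delta n"
proof -
  have "- n - 1 = - (n - 1) - 2" "- n - 1 - 1 = - n - 2"
    by simp_all
  then have "chebS (- n - 1) = - chebS (n - 1)" "chebS (- n - 1 - 1) = - chebS n"
    by (simp_all only: chebS_reflect)
  then show ?thesis
    by (simp add: Delta_def pderiv_minus algebra_simps)
qed

lemma chebS_Suc_of_nat [simp]: "chebS (int k + 1) = chebS_nat (Suc k)"
  using chebS_of_nat[of "Suc k"] by (simp add: add.commute)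

lemma Delta_Suc_of_nat:
  "Delta (int k + 1) = pderiv (chebS_nat (Suc k)) * chebS_nat k - chebS_nat (Suc k) * pderiv (chebS_nat k)"
  by (simp add: Delta_def)

lemma map_poly_of_int_add [simp]:
  "map_poly (of_int :: int \<Rightarrow> 'a::comm_ring_1) (p + q) = map_poly of_int p + map_poly of_int q"
  by (simp add: poly_eq_iff coeff_map_poly)

lemma map_poly_of_int_diff [simp]:
  "map_poly (of_int :: int \<Rightarrow> 'a::comm_ring_1) (p - q) = map_poly of_int p - map_poly of_int q"
  by (simp add: poly_eq_iff coeff_map_poly)

lemma map_poly_of_int_uminus [simp]:
  "map_poly (of_int :: int \<Rightarrow> 'a::comm_ring_1) (- p) = - map_poly of_int p"
  by (simp add: poly_eq_iff coeff_map_poly)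

lemma map_poly_of_int_mult [simp]:
  "map_poly (of_int :: int \<Rightarrow> 'a::comm_ring_1) (p * q) = map_poly of_int p * map_poly of_int q"
  by (simp add: poly_eq_iff coeff_map_poly coeff_mult)

lemma map_poly_of_int_of_nat [simp]:
  "map_poly (of_int :: int \<Rightarrow> 'a::comm_ring_1) (of_nat k) = of_nat k"
  by (simp add: of_nat_poly map_poly_pCons)

lemma map_poly_of_int_numeral [simp]:
  "map_poly (of_int :: int \<Rightarrow> 'a::comm_ring_1) (numeral m) = numeral m"
  using map_poly_of_int_of_nat[of "numeral m"] by simp

lemma map_poly_of_int_power [simp]:
  "map_poly (of_int :: int \<Rightarrow> 'a::comm_ring_1) (p ^ k) = map_poly of_int p ^ k"
  by (induction k) simp_all

lemma poly_map_poly_of_int_polyX [simp]: "poly (map_poly of_int polyX) x = x"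
  by (simp add: polyX_def map_poly_pCons)

abbreviation chebS_at :: "nat \<Rightarrow> 'a::comm_ring_1 \<Rightarrow> 'a" where
  "chebS_at k x \<equiv> poly (map_poly of_int (chebS_nat k)) x"

lemma chebS_at_cassini:
  "chebS_at (Suc k) x^2 + chebS_at k x^2 - x * chebS_at (Suc k) x * chebS_at k x = 1"
  using arg_cong[OF chebS_nat_cassini[of k], of "\<lambda>q. poly (map_poly of_int q) x"] by simp

lemma chebS_at_squares_at_Delta_root:
  assumes "poly (map_poly of_int (Delta (int k + 1))) x = 0"
  shows "chebS_at (Suc k) x^2 - chebS_at k x^2 = of_nat (2 * k + 3)"
  using assms arg_cong[OF chebS_nat_wronskian[of k], of "\<lambda>q. poly (map_poly of_int q) x"]
  by (simp add: Delta_Suc_of_nat)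

context
  fixes v :: "'a::field \<Rightarrow> ereal"
  assumes v: "valuation v"
begin

lemma valuation_mult: "v (x * y) = v x + v y"
  using v unfolding valuation_def by blast

lemma valuation_add: "min (v x) (v y) \<le> v (x + y)"
  using v unfolding valuation_def by blast

lemma valuation_eq_infinity_iff: "v x = \<infinity> \<longleftrightarrow> x = 0"
  using v unfolding valuation_def by blast

lemma valuation_neq_minus_infinity: "v x \<noteq> - \<infinity>"
  using v unfolding valuation_def by blast

lemma valuation_finite: "x \<noteq> 0 \<Longrightarrow> \<bar>v x\<bar> \<noteq> \<infinity>"
  using valuation_eq_infinity_iff[of x] valuation_neq_minus_infinity[of x] by auto

lemma valuation_one [simp]: "v 1 = 0"
proof -
  have "v 1 = v 1 + v 1"
    using valuation_mult[of 1 1] by simp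
  with valuation_finite[of 1] show ?thesis
    by (cases "v 1") auto
qed

lemma valuation_uminus [simp]: "v (- x) = v x"
proof -
  have "v (- 1) + v (- 1) = 0"
    using valuation_mult[of "- 1" "- 1"] by simp
  with valuation_finite[of "- 1"] have "v (- 1) = 0"
    by (cases "v (- 1)") auto
  then show ?thesis
    using valuation_mult[of "- 1" x] by simp
qed

lemma valuation_diff: "min (v x) (v y) \<le> v (x - y)"
  using valuation_add[of x "- y"] by simp

lemma valuation_add_pos:
  assumes "0 < v x" "0 < v y"
  shows "0 < v (x + y)"
proof -
  from assms have "0 < min (v x) (v y)"
    by simp
  from this valuation_add show ?thesis
    by (rule less_le_trans)
qed

lemma valuation_diff_pos: "0 < v x \<Longrightarrow> 0 < v y \<Longrightarrow> 0 < v (x - y)"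
  using valuation_add_pos[of x "- y"] by simp

lemma valuation_diff_nonneg:
  assumes "0 \<le> v x" "0 \<le> v y"
  shows "0 \<le> v (x - y)"
proof -
  from assms have "0 \<le> min (v x) (v y)"
    by simp
  from this valuation_diff show ?thesis
    by (rule order_trans)
qed

lemma valuation_add_eq_left:
  assumes "v x < v y"
  shows "v (x + y) = v x"
proof -
  have "v x \<le> v (x + y)"
    using valuation_add[of x y] assms by simp
  moreover have "min (v (x + y)) (v y) \<le> v x"
    using valuation_diff[of "x + y" y] by simp
  ultimately show ?thesis
    using assms by (auto simp: min_def split: if_splits)
qed

lemma valuation_power2: "v (x^2) = v x + v x"
  by (simp add: power2_eq_square valuation_mult)

lemma valuation_power2_pos_iff: "0 < v (x^2) \<longleftrightarrow> 0 < v x"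
  by (cases "v x") (simp_all add: valuation_power2)

lemma valuation_of_nat_nonneg: "0 \<le> v (of_nat m)"
proof (induction m)
  case (Suc m)
  then show ?case
    using valuation_add[of 1 "of_nat m"] by simp
qed (use valuation_eq_infinity_iff[of 0] in simp)

lemma valuation_of_int_nonneg: "0 \<le> v (of_int z)"
  using valuation_of_nat_nonneg[of "nat \<bar>z\<bar>"] by (cases "0 \<le> z") simp_all

lemma valuation_of_int_pos_if_dvd:
  assumes "0 < v (of_int p)" "p dvd z"
  shows "0 < v (of_int z)"
proof -
  obtain q where "z = p * q"
    using assms(2) by blast
  then have "v (of_int z) = v (of_int p) + v (of_int q)"
    by (simp add: valuation_mult)
  then show ?thesis
    using assms(1) valuation_of_int_nonneg[of q] by (metis add_pos_nonneg)
qed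

lemma valuation_chebS_at_nonneg:
  assumes "0 \<le> v x"
  shows "0 \<le> v (chebS_at k x)"
proof (induction k rule: chebS_nat.induct)
  case (3 k)
  then have "0 \<le> v (x * chebS_at (Suc k) x)"
    using assms by (simp add: valuation_mult)
  with 3 show ?case
    by (simp add: valuation_diff_nonneg)
qed (use assms in simp_all)

lemma valuation_chebS_at_neg:
  assumes r: "v x = ereal r" "r < 0"
  shows "v (chebS_at k x) = ereal (real k * r)"
proof (induction k rule: chebS_nat.induct)
  case (3 k)
  have lead: "v (x * chebS_at (Suc k) x) = ereal (real (k + 2) * r)"
    using "3.IH"(1) r(1) by (simp add: valuation_mult algebra_simps)
  also have "\<dots> < v (- chebS_at k x)"
    using "3.IH"(2) r(2) by simp
  finally have "v (x * chebS_at (Suc k) x + - chebS_at k x) = v (x * chebS_at (Suc k) x)"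
    by (rule valuation_add_eq_left)
  then show ?case
    using lead by simp
qed (simp_all add: r(1))

lemma valuation_nonneg_at_Delta_root:
  assumes "poly (map_poly of_int (Delta (int k + 1))) x = 0"
  shows "0 \<le> v x"
proof (rule ccontr)
  assume "\<not> 0 \<le> v x"
  then obtain r where r: "v x = ereal r" "r < 0"
    using valuation_neq_minus_infinity[of x] by (cases "v x") auto
  have "v (chebS_at (Suc k) x^2) = ereal (2 * real (Suc k) * r)"
    using valuation_chebS_at_neg[OF r] by (simp add: valuation_power2)
  also have "\<dots> < v (- (chebS_at k x^2))"
    using valuation_chebS_at_neg[OF r] r(2) by (simp add: valuation_power2)
  finally have "v (chebS_at (Suc k) x^2 + - (chebS_at k x^2)) = ereal (2 * real (Suc k) * r)"
    by (subst valuation_add_eq_left) (simp_all add: valuation_power2 valuation_chebS_at_neg[OF r])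
  with r(2) have "v (of_nat (2 * k + 3) :: 'a) < 0"
    using chebS_at_squares_at_Delta_root[OF assms] by (simp add: mult_pos_neg)
  then show False
    using valuation_of_nat_nonneg[of "2 * k + 3"] by simp
qed

lemma valuation_eq_0_of_cassini:
  assumes cassini: "a^2 + b^2 - w * a * b = 1"
    and nonneg: "0 \<le> v w" "0 \<le> v a" "0 \<le> v b"
    and diff: "0 < v (a^2 - b^2)"
  shows "v a = 0 \<and> v b = 0"
proof -
  have "0 < v (b^2)" if "0 < v (a^2)"
    using valuation_diff_pos[OF that diff] by simp
  moreover have "0 < v (a^2)" if "0 < v (b^2)"
    using valuation_add_pos[OF diff that] by simp
  moreover have False if "0 < v a" "0 < v b"
  proof -
    have "0 < v (a^2 + b^2)"
      using that by (simp add: valuation_add_pos valuation_power2_pos_iff)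
    moreover have "0 < v (w * a * b)"
      using that nonneg by (simp add: valuation_mult add_nonneg_pos add_pos_pos)
    ultimately have "0 < v (a^2 + b^2 - w * a * b)"
      by (rule valuation_diff_pos)
    then show False
      using cassini by simp
  qed
  ultimately show ?thesis
    using nonneg by (auto simp: valuation_power2_pos_iff order.order_iff_strict)
qed

lemma valuation_chebS_at_Delta_root:
  assumes "0 < v (of_int p)" "p dvd int (2 * k + 3)"
    and root: "poly (map_poly of_int (Delta (int k + 1))) x = 0"
  shows "v (chebS_at k x) = 0 \<and> v (chebS_at (Suc k) x) = 0"
proof -
  have x: "0 \<le> v x"
    using valuation_nonneg_at_Delta_root[OF root] .
  have "0 < v (chebS_at (Suc k) x^2 - chebS_at k x^2)"
    using chebS_at_squares_at_Delta_root[OF root] valuation_of_int_pos_if_dvd[OF assms(1,2)]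
    by simp
  with chebS_at_cassini x valuation_chebS_at_nonneg[OF x] show ?thesis
    using valuation_eq_0_of_cassini by blast
qed

end

theorem lemma5p6:
  fixes n :: int and p :: int and \<omega> :: "'k::field_char_0" and v :: "'k \<Rightarrow> ereal"
  assumes "prime p" and "p dvd 2 * n + 1"
    and "number_field TYPE('k)"
    and "poly (map_poly of_int (Delta n)) \<omega> = 0"
    and "valuation v" and "v (of_int p) = 1"
  shows "v (poly (map_poly of_int (chebS (n - 1))) \<omega>) = 0"
proof -
  have vp: "0 < v (of_int p)"
    using assms(6) by simp
  have "\<not> is_unit p"
    using assms(1) not_prime_unit by blast
  then have "n \<noteq> 0" "n \<noteq> -1"
    using assms(2) by auto
  then consider (pos) "1 \<le> n" | (neg) "n \<le> -2"
    by linarith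
  then show ?thesis
  proof cases
    case pos
    define k where "k = nat (n - 1)"
    have n: "n = int k + 1"
      using pos by (simp add: k_def)
    have "2 * n + 1 = int (2 * k + 3)"
      by (simp add: n)
    with assms(2) have "p dvd int (2 * k + 3)"
      by simp
    moreover have "chebS (n - 1) = chebS_nat k"
      by (simp add: n)
    ultimately show ?thesis
      using valuation_chebS_at_Delta_root[OF assms(5) vp] assms(4) n by simp
  next
    case neg
    define k where "k = nat (- n - 2)"
    have n: "n = - (int k + 1) - 1"
      using neg by (simp add: k_def)
    have "2 * n + 1 = - int (2 * k + 3)"
      by (simp add: n)
    with assms(2) have dvd: "p dvd int (2 * k + 3)"
      by (simp only: dvd_minus_iff)
    have "Delta n = - Delta (int k + 1)"
      unfolding n by (rule Delta_reflect)
    with assms(4) have root: "poly (map_poly of_int (Delta (int k + 1))) \<omega> = 0"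
      by simp
    have "n - 1 = - (int k + 1) - 2"
      by (simp add: n)
    then have "chebS (n - 1) = - chebS_nat (Suc k)"
      by (simp only: chebS_reflect chebS_Suc_of_nat)
    then show ?thesis
      using valuation_chebS_at_Delta_root[OF assms(5) vp dvd root]
      by (simp add: valuation_uminus[OF assms(5)])
  qed
qed

end
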